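(* Let $n\ge 1$, $d_1,\dots,d_n\ge 1$, $L_i\in\mathbb{C}^{d_i\times d_i}$ ($i=1,\dots,n$) and $C_{i,i-1}\in\mathbb{C}^{d_i\times d_{i-1}}$ ($i=2,\dots,n$). Assume: (i) each $L_i$ is invertible and diagonalizable, $L_iV_i=V_i\Lambda_i$ with $V_i$ invertible and $\Lambda_i=\mathrm{diag}(\lambda_{i,1},\dots,\lambda_{i,d_i})$; (ii) $\sigma(L_i)\cap\sigma(L_j)=\emptyset$ for all $i\neq j$; (iii) $\|L_1\|<\|L_2\|<\cdots<\|L_n\|\le 1$. Then for every $x=(x_1,\dots,x_n)\in\mathbb{C}^{d_1}\times\cdots\times\mathbb{C}^{d_n}$, $$\lim_{t\to\infty}\big\|\mathsf{Lin}^{\circ t}(x)-\mathsf{Nom}^{\circ t}(\mathsf{pert}(x))\big\|_\times=0.$$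
   Context: Each $\mathbb{C}^{d_i}$ carries a fixed norm $\|\cdot\|$, matrices carry the induced operator norm, and $\|(x_1,\dots,x_n)\|_\times=\sum_{i=1}^n\|x_i\|$. The linear chained cascade map is $\mathsf{Lin}(x_1,\dots,x_n)=(L_1x_1,\;L_2x_2+C_{2,1}x_1,\;\dots,\;L_nx_n+C_{n,n-1}x_{n-1})$ and the nominal map is $\mathsf{Nom}(x_1,\dots,x_n)=(L_1x_1,\dots,L_nx_n)$; $\mathsf{F}^{\circ t}$ denotes the $t$-fold iterate. Matrices $D_{i,j}\in\mathbb{C}^{d_i\times d_j}$ ($1\le j\le i\le n$) are defined recursively in $i$: $D_{i,i}=I_{d_i}$; for $i\ge 2$ and $1\le j\le i-1$, let $\tilde C_{i,j}$ have entries $[\tilde C_{i,j}]_{\ell,m}=[V_i^{-1}C_{i,i-1}D_{i-1,j}V_j]_{\ell,m}\,(1-\lambda_{j,m}/\lambda_{i,\ell})^{-1}$ and set $D_{i,j}=L_i^{-1}V_i\tilde C_{i,j}V_j^{-1}$. Define $\mathsf{pert}_1(x_1)=x_1$, $\mathsf{pert}_i(x_1,\dots,x_i)=x_i+\sum_{j=1}^{i-1}(-1)^{i-1-j}D_{i,j}\,\mathsf{pert}_j(x_1,\dots,x_j)$ for $i\ge2$, and $\mathsf{pert}(x)=(\mathsf{pert}_1(x_1),\dots,\mathsf{pert}_n(x_1,\dots,x_n))$. *)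

theory Defs
  imports Complex_Main "Jordan_Normal_Form.Spectral_Radius"
begin

(* Block index i ranges over {1..n} (1-based, as in the paper); matrix/vector entries are
   0-based as in Jordan_Normal_Form. Block vectors x = (x_1,...,x_n) are functions
   nat => complex vec with x i in carrier_vec (d i). *)

definition is_norm_on :: "nat \<Rightarrow> (complex vec \<Rightarrow> real) \<Rightarrow> bool" where
  "is_norm_on k N \<longleftrightarrow>
     (\<forall>x\<in>carrier_vec k. 0 \<le> N x \<and> (N x = 0 \<longleftrightarrow> x = 0\<^sub>v k)) \<and>
     (\<forall>a. \<forall>x\<in>carrier_vec k. N (a \<cdot>\<^sub>v x) = cmod a * N x) \<and>
     (\<forall>x\<in>carrier_vec k. \<forall>y\<in>carrier_vec k. N (x + y) \<le> N x + N y)"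

definition op_norm :: "(complex vec \<Rightarrow> real) \<Rightarrow> nat \<Rightarrow> complex mat \<Rightarrow> real" where
  "op_norm N k A = Sup {N (A *\<^sub>v x) | x. x \<in> carrier_vec k \<and> N x \<le> 1}"

definition minv :: "complex mat \<Rightarrow> complex mat" where
  "minv A = (SOME B. B \<in> carrier_mat (dim_row A) (dim_row A) \<and>
                     A * B = 1\<^sub>m (dim_row A) \<and> B * A = 1\<^sub>m (dim_row A))"

(* D_{i,j}; recursion on i. lam i l = lambda_{i,l+1} (0-based entry index) *)
fun Dmat :: "(nat \<Rightarrow> nat) \<Rightarrow> (nat \<Rightarrow> complex mat) \<Rightarrow> (nat \<Rightarrow> complex mat) \<Rightarrow>
             (nat \<Rightarrow> complex mat) \<Rightarrow> (nat \<Rightarrow> nat \<Rightarrow> complex) \<Rightarrow> nat \<Rightarrow> nat \<Rightarrow> complex mat" where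
  "Dmat d L C V lam 0 j = 1\<^sub>m (d 0)"
| "Dmat d L C V lam (Suc i) j =
     (if j = Suc i then 1\<^sub>m (d (Suc i))
      else
        (let M = minv (V (Suc i)) * C (Suc i) * Dmat d L C V lam i j * V j;
             Ct = mat (d (Suc i)) (d j)
                    (\<lambda>(l, m). M $$ (l, m) * inverse (1 - lam j m / lam (Suc i) l))
         in minv (L (Suc i)) * V (Suc i) * Ct * minv (V j)))"

function pert :: "(nat \<Rightarrow> nat) \<Rightarrow> (nat \<Rightarrow> nat \<Rightarrow> complex mat) \<Rightarrow> nat \<Rightarrow> (nat \<Rightarrow> complex vec) \<Rightarrow> complex vec" where
  "pert d D i x =
     (if i \<le> 1 then x i
      else vec (d i) (\<lambda>l. x i $ l +
             (\<Sum>j\<in>{1..<i}. (-1) ^ (i - 1 - j) * ((D i j *\<^sub>v pert d D j x) $ l))))"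
  by auto
termination by (relation "measure (\<lambda>(d, D, i, x). i)") auto

definition pert_map :: "(nat \<Rightarrow> nat) \<Rightarrow> (nat \<Rightarrow> nat \<Rightarrow> complex mat) \<Rightarrow> (nat \<Rightarrow> complex vec) \<Rightarrow> (nat \<Rightarrow> complex vec)" where
  "pert_map d D x = (\<lambda>i. pert d D i x)"

definition Lin :: "(nat \<Rightarrow> complex mat) \<Rightarrow> (nat \<Rightarrow> complex mat) \<Rightarrow> (nat \<Rightarrow> complex vec) \<Rightarrow> (nat \<Rightarrow> complex vec)" where
  "Lin L C x = (\<lambda>i. if i \<le> 1 then L i *\<^sub>v x i else L i *\<^sub>v x i + C i *\<^sub>v x (i - 1))"

definition Nom :: "(nat \<Rightarrow> complex mat) \<Rightarrow> (nat \<Rightarrow> complex vec) \<Rightarrow> (nat \<Rightarrow> complex vec)" where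
  "Nom L x = (\<lambda>i. L i *\<^sub>v x i)"

definition prod_norm :: "nat \<Rightarrow> (nat \<Rightarrow> complex vec \<Rightarrow> real) \<Rightarrow> (nat \<Rightarrow> complex vec) \<Rightarrow> real" where
  "prod_norm n N x = (\<Sum>i=1..n. N i (x i))"

end

(*
  The matrices D_{i,j} solve the Sylvester equations
  L_i D_{i,j} = D_{i,j} L_j + C_{i,i-1} D_{i-1,j}: in the eigenbases of L_i and L_j
  this equation decouples entrywise, with coefficients 1 - lambda_{j,m} / lambda_{i,l}
  that are nonzero because the spectra are disjoint. This makes pert a conjugacy,
  pert o Lin = Nom o pert, so block i of Lin^t(x) - Nom^t(pert x) is x_i^(t) - pert_i(x^(t)),
  an alternating sum of the vectors D_{i,j} L_j^t pert_j(x) with j < i. For j < n every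
  eigenvalue of L_j has modulus at most ||L_j|| < ||L_n|| <= 1, so these blocks of the
  nominal iteration decay, and with them the difference.
*)

theory Submission
  imports Defs "HOL-Analysis.Function_Topology" "HOL-Analysis.Elementary_Metric_Spaces"
begin

section \<open>Norms on finite-dimensional complex vectors\<close>

lemma is_norm_on_nonneg: "is_norm_on k N \<Longrightarrow> x \<in> carrier_vec k \<Longrightarrow> 0 \<le> N x"
  unfolding is_norm_on_def by blast

lemma is_norm_on_eq_0_iff: "is_norm_on k N \<Longrightarrow> x \<in> carrier_vec k \<Longrightarrow> N x = 0 \<longleftrightarrow> x = 0\<^sub>v k"
  unfolding is_norm_on_def by blast

lemma is_norm_on_smult: "is_norm_on k N \<Longrightarrow> x \<in> carrier_vec k \<Longrightarrow> N (a \<cdot>\<^sub>v x) = cmod a * N x"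
  unfolding is_norm_on_def by blast

lemma is_norm_on_triangle:
  "is_norm_on k N \<Longrightarrow> x \<in> carrier_vec k \<Longrightarrow> y \<in> carrier_vec k \<Longrightarrow> N (x + y) \<le> N x + N y"
  unfolding is_norm_on_def by blast

lemma is_norm_on_minus_commute:
  assumes "is_norm_on k N" "x \<in> carrier_vec k" "y \<in> carrier_vec k"
  shows "N (x - y) = N (y - x)"
proof -
  have "x - y = (-1) \<cdot>\<^sub>v (y - x)" by (rule eq_vecI) (use assms in auto)
  then show ?thesis using is_norm_on_smult[OF assms(1), of "y - x" "-1"] assms by simp
qed

lemma is_norm_on_diff_le:
  assumes "is_norm_on k N" "x \<in> carrier_vec k" "y \<in> carrier_vec k"
  shows "N x - N y \<le> N (x - y)"
proof -
  have "x = (x - y) + y" by (rule eq_vecI) (use assms in auto)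
  then have "N x \<le> N (x - y) + N y"
    using is_norm_on_triangle[OF assms(1), of "x - y" y] assms by (metis minus_carrier_vec)
  then show ?thesis by simp
qed

lemma is_norm_on_abs_diff_le:
  assumes "is_norm_on k N" "x \<in> carrier_vec k" "y \<in> carrier_vec k"
  shows "\<bar>N x - N y\<bar> \<le> N (x - y)"
  using is_norm_on_diff_le[OF assms] is_norm_on_diff_le[OF assms(1,3,2)]
    is_norm_on_minus_commute[OF assms] by linarith

lemma is_norm_on_le_sum_coordinates:
  assumes N: "is_norm_on k N" and v: "v \<in> carrier_vec k"
  shows "N v \<le> (\<Sum>l<k. cmod (v $ l) * N (unit_vec k l))"
proof -
  define trunc where "trunc p = vec k (\<lambda>l. if l < p then v $ l else 0)" for p
  have "N (trunc p) \<le> (\<Sum>l<p. cmod (v $ l) * N (unit_vec k l))" if "p \<le> k" for p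
    using that
  proof (induction p)
    case 0
    have "trunc 0 = 0\<^sub>v k" unfolding trunc_def by (rule eq_vecI) auto
    then show ?case using is_norm_on_eq_0_iff[OF N, of "0\<^sub>v k"] by simp
  next
    case (Suc p)
    have "trunc (Suc p) = trunc p + (v $ p) \<cdot>\<^sub>v unit_vec k p"
      unfolding trunc_def by (rule eq_vecI) (auto simp: unit_vec_def less_Suc_eq)
    also have "N \<dots> \<le> N (trunc p) + N ((v $ p) \<cdot>\<^sub>v unit_vec k p)"
      by (rule is_norm_on_triangle[OF N]) (auto simp: trunc_def)
    also have "\<dots> = N (trunc p) + cmod (v $ p) * N (unit_vec k p)"
      using is_norm_on_smult[OF N] by simp
    finally have "N (trunc (Suc p)) \<le> N (trunc p) + cmod (v $ p) * N (unit_vec k p)" .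
    then show ?case using Suc by simp
  qed
  moreover have "trunc k = v" unfolding trunc_def by (rule eq_vecI) (use v in auto)
  ultimately show ?thesis by fastforce
qed

lemma is_norm_on_tendsto:
  assumes N: "is_norm_on k N"
    and lim: "\<And>l. l < k \<Longrightarrow> ((\<lambda>t. f t l) \<longlongrightarrow> x l) F"
  shows "((\<lambda>t. N (vec k (f t))) \<longlongrightarrow> N (vec k x)) F"
proof -
  define b where "b t = (\<Sum>l<k. cmod (f t l - x l) * N (unit_vec k l))" for t
  have b: "(b \<longlongrightarrow> 0) F"
    unfolding b_def
  proof (rule tendsto_null_sum)
    fix l assume "l \<in> {..<k}"
    then have "((\<lambda>t. f t l - x l) \<longlongrightarrow> 0) F" using lim[of l] by (simp add: LIM_zero)
    then show "((\<lambda>t. cmod (f t l - x l) * N (unit_vec k l)) \<longlongrightarrow> 0) F"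
      by (intro tendsto_mult_left_zero tendsto_norm_zero)
  qed
  have bound: "\<bar>N (vec k (f t)) - N (vec k x)\<bar> \<le> b t" for t
  proof -
    have "\<bar>N (vec k (f t)) - N (vec k x)\<bar> \<le> N (vec k (f t) - vec k x)"
      by (rule is_norm_on_abs_diff_le[OF N]) auto
    also have "\<dots> \<le> b t"
      using is_norm_on_le_sum_coordinates[OF N, of "vec k (f t) - vec k x"] by (simp add: b_def)
    finally show ?thesis .
  qed
  show ?thesis
  proof (rule tendsto_sandwich[of "\<lambda>t. N (vec k x) - b t" _ _ "\<lambda>t. N (vec k x) + b t"])
    show "\<forall>\<^sub>F t in F. N (vec k x) - b t \<le> N (vec k (f t))"
      "\<forall>\<^sub>F t in F. N (vec k (f t)) \<le> N (vec k x) + b t"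
      by (intro always_eventually allI; smt (verit) bound)+
  qed (use tendsto_add[OF tendsto_const b] tendsto_diff[OF tendsto_const b] in auto)
qed

lemma is_norm_on_tendsto_0:
  assumes N: "is_norm_on k N" and lim: "\<And>l. l < k \<Longrightarrow> ((\<lambda>t. f t l) \<longlongrightarrow> 0) F"
  shows "((\<lambda>t. N (vec k (f t))) \<longlongrightarrow> 0) F"
proof -
  have "N (vec k (\<lambda>_. 0)) = 0"
    using is_norm_on_eq_0_iff[OF N, of "0\<^sub>v k"] by (simp add: zero_vec_def)
  then show ?thesis using is_norm_on_tendsto[OF N lim] by simp
qed

lemma compact_unit_cball_complex: "compact (cball (0::complex) 1)"
proof -
  have "cball (0::complex) 1 = (\<lambda>p. Complex (fst p) (snd p)) ` cball (0::real \<times> real) 1"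
  proof (intro Set.set_eqI iffI)
    fix z :: complex assume "z \<in> cball 0 1"
    then show "z \<in> (\<lambda>p. Complex (fst p) (snd p)) ` cball (0::real \<times> real) 1"
      by (intro image_eqI[of _ _ "(Re z, Im z)"]) (auto simp: norm_Pair cmod_def)
  qed (auto simp: norm_Pair cmod_def)
  moreover have "continuous_on UNIV (\<lambda>p::real \<times> real. Complex (fst p) (snd p))"
    unfolding Complex_eq by (intro continuous_intros)
  ultimately show ?thesis
    by (metis compact_cball compact_continuous_image continuous_on_subset subset_UNIV)
qed

text \<open>The unit sphere of the maximum norm on \<open>\<complex>\<^sup>k\<close>, as a subset of the product space
  \<open>nat \<Rightarrow> complex\<close>.\<close>

lemma compact_unit_sphere_max_norm:
  "compact (\<Union>l<k. PiE UNIV (\<lambda>i. if i < k then cball 0 1 else {0})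
                   \<inter> {h :: nat \<Rightarrow> complex. cmod (h l) = 1})"
proof (intro compact_UN compact_Int_closed)
  have "compactin (product_topology (\<lambda>i. euclidean) UNIV)
          (PiE UNIV (\<lambda>i. if i < k then cball (0::complex) 1 else {0}))"
    by (auto simp: compactin_PiE compact_unit_cball_complex)
  then show "compact (PiE UNIV (\<lambda>i. if i < k then cball (0::complex) 1 else {0}))"
    by (simp add: euclidean_product_topology)
  show "closed {h :: nat \<Rightarrow> complex. cmod (h l) = 1}" for l
    by (intro closed_Collect_eq continuous_intros continuous_on_product_coordinates)
qed auto

lemma is_norm_on_bounded_below_on_unit_sphere:
  assumes N: "is_norm_on k N" and k: "0 < k"
  shows "\<exists>m>0. \<forall>h. (\<forall>i<k. cmod (h i) \<le> 1) \<longrightarrow> (\<exists>l<k. cmod (h l) = 1) \<longrightarrow> m \<le> N (vec k h)"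
proof -
  define K where "K = (\<Union>l<k. PiE UNIV (\<lambda>i. if i < k then cball 0 1 else {0})
                   \<inter> {h :: nat \<Rightarrow> complex. cmod (h l) = 1})"
  have restrict_in_K: "(\<lambda>i. if i < k then h i else 0) \<in> K"
    if "\<forall>i<k. cmod (h i) \<le> 1" "l < k" "cmod (h l) = 1" for h l
    using that unfolding K_def by (intro UN_I[of l]) (auto simp: PiE_UNIV_domain dist_norm)
  have "K \<noteq> {}"
    using restrict_in_K[of "\<lambda>_. 1" 0] k by auto
  moreover have "continuous_on K (\<lambda>h. N (vec k h))"
    unfolding continuous_on_def
  proof (intro ballI is_norm_on_tendsto[OF N])
    fix h l assume "h \<in> K"
    then show "((\<lambda>h. h l) \<longlongrightarrow> h l) (at h within K)"
      using continuous_on_product_coordinates[of l] unfolding continuous_on_def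
      by (metis UNIV_I tendsto_within_subset subset_UNIV)
  qed
  ultimately obtain h0 where h0: "h0 \<in> K" and min: "\<And>h. h \<in> K \<Longrightarrow> N (vec k h0) \<le> N (vec k h)"
    using continuous_attains_inf[OF compact_unit_sphere_max_norm[of k, folded K_def]] by blast
  obtain l0 where l0: "l0 < k" "cmod (h0 l0) = 1" using h0 unfolding K_def by auto
  then have "vec k h0 \<noteq> 0\<^sub>v k" by (metis index_vec index_zero_vec(1) norm_zero zero_neq_one)
  then have "0 < N (vec k h0)"
    using is_norm_on_eq_0_iff[OF N] is_norm_on_nonneg[OF N] by (metis less_eq_real_def vec_carrier)
  moreover have "N (vec k h0) \<le> N (vec k h)" if "\<forall>i<k. cmod (h i) \<le> 1" "l < k" "cmod (h l) = 1" for h l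
  proof -
    have "vec k h = vec k (\<lambda>i. if i < k then h i else 0)" by auto
    then show ?thesis using min[OF restrict_in_K[OF that]] by simp
  qed
  ultimately show ?thesis by blast
qed

lemma is_norm_on_coordinate_bound:
  assumes N: "is_norm_on k N"
  shows "\<exists>c>0. \<forall>v\<in>carrier_vec k. \<forall>l<k. cmod (v $ l) \<le> c * N v"
proof (cases "k = 0")
  case True
  then show ?thesis by (intro exI[of _ 1]) auto
next
  case False
  then obtain m where m: "0 < m"
    and min: "\<And>h l. \<forall>i<k. cmod (h i) \<le> 1 \<Longrightarrow> l < k \<Longrightarrow> cmod (h l) = 1 \<Longrightarrow> m \<le> N (vec k h)"
    using is_norm_on_bounded_below_on_unit_sphere[OF N] by blast
  have "cmod (v $ l) \<le> N v / m" if v: "v \<in> carrier_vec k" and l: "l < k" for v l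
  proof -
    define M where "M = Max ((\<lambda>i. cmod (v $ i)) ` {..<k})"
    have M_ge: "cmod (v $ i) \<le> M" if "i < k" for i
      unfolding M_def using that by (intro Max_ge) auto
    have "M \<in> (\<lambda>i. cmod (v $ i)) ` {..<k}"
      unfolding M_def using False by (intro Max_in) auto
    then obtain i0 where i0: "i0 < k" "M = cmod (v $ i0)" by blast
    show ?thesis
    proof (cases "M = 0")
      case True
      then show ?thesis using M_ge[OF l] is_norm_on_nonneg[OF N v] m by simp
    next
      case False
      then have "0 < M" using i0(2) norm_ge_zero[of "v $ i0"] by linarith
      have "m \<le> N (vec k (\<lambda>i. v $ i / M))"
        by (rule min[of _ i0]) (use i0 M_ge \<open>0 < M\<close> in \<open>auto simp: norm_divide\<close>)
      also have "vec k (\<lambda>i. v $ i / M) = complex_of_real (inverse M) \<cdot>\<^sub>v v"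
        using v by (auto simp: field_simps)
      also have "N \<dots> = N v / M"
        using is_norm_on_smult[OF N v] \<open>0 < M\<close> by (simp add: norm_inverse divide_inverse)
      finally have "M \<le> N v / m" using m \<open>0 < M\<close> by (simp add: field_simps)
      then show ?thesis using M_ge[OF l] by simp
    qed
  qed
  then show ?thesis using m by (intro exI[of _ "1 / m"]) auto
qed

section \<open>Matrices\<close>

lemma index_mult_mat_vec_sum:
  fixes A :: "'a :: semiring_0 mat"
  assumes A: "A \<in> carrier_mat p q" and w: "w \<in> carrier_vec q" and l: "l < p"
  shows "(A *\<^sub>v w) $ l = (\<Sum>m<q. A $$ (l, m) * w $ m)"
  using A w l by (auto simp: scalar_prod_def lessThan_atLeast0 intro!: sum.cong)

text \<open>Needed because the supremum in \<^const>\<open>op_norm\<close> is unspecified for an unbounded set.\<close>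

lemma op_norm_bdd_above:
  assumes N: "is_norm_on k N" and A: "A \<in> carrier_mat k k"
  shows "bdd_above {N (A *\<^sub>v x) | x. x \<in> carrier_vec k \<and> N x \<le> 1}"
proof -
  obtain c where c: "0 < c" "\<And>v l. v \<in> carrier_vec k \<Longrightarrow> l < k \<Longrightarrow> cmod (v $ l) \<le> c * N v"
    using is_norm_on_coordinate_bound[OF N] by blast
  have "N (A *\<^sub>v x) \<le> (\<Sum>l<k. (\<Sum>m<k. cmod (A $$ (l, m)) * c) * N (unit_vec k l))"
    if x: "x \<in> carrier_vec k" "N x \<le> 1" for x
  proof -
    have "N (A *\<^sub>v x) \<le> (\<Sum>l<k. cmod ((A *\<^sub>v x) $ l) * N (unit_vec k l))"
      using A x by (intro is_norm_on_le_sum_coordinates[OF N]) auto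
    also have "\<dots> \<le> (\<Sum>l<k. (\<Sum>m<k. cmod (A $$ (l, m)) * c) * N (unit_vec k l))"
    proof (intro sum_mono mult_right_mono is_norm_on_nonneg[OF N])
      fix l assume "l \<in> {..<k}"
      have "cmod ((A *\<^sub>v x) $ l) \<le> (\<Sum>m<k. cmod (A $$ (l, m) * x $ m))"
        using \<open>l \<in> {..<k}\<close> by (simp add: index_mult_mat_vec_sum[OF A x(1)] norm_sum)
      also have "\<dots> \<le> (\<Sum>m<k. cmod (A $$ (l, m)) * c)"
      proof (intro sum_mono)
        fix m assume "m \<in> {..<k}"
        then have "cmod (x $ m) \<le> c" using c(2)[OF x(1)] x(2) c(1)
          by (smt (verit) lessThan_iff mult_left_le)
        then show "cmod (A $$ (l, m) * x $ m) \<le> cmod (A $$ (l, m)) * c"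
          by (simp add: norm_mult mult_left_mono)
      qed
      finally show "cmod ((A *\<^sub>v x) $ l) \<le> (\<Sum>m<k. cmod (A $$ (l, m)) * c)" .
    qed auto
    finally show ?thesis .
  qed
  then show ?thesis by (intro bdd_aboveI) blast
qed

lemma eigenvalue_norm_le_op_norm:
  assumes N: "is_norm_on k N" and A: "A \<in> carrier_mat k k" and u: "eigenvector A u \<mu>"
  shows "cmod \<mu> \<le> op_norm N k A"
proof -
  have u_carrier: "u \<in> carrier_vec k" and "u \<noteq> 0\<^sub>v k" and Au: "A *\<^sub>v u = \<mu> \<cdot>\<^sub>v u"
    using u A unfolding eigenvector_def by auto
  then have "0 < N u" using is_norm_on_nonneg[OF N] is_norm_on_eq_0_iff[OF N] by force
  define x where "x = complex_of_real (1 / N u) \<cdot>\<^sub>v u"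
  have x: "x \<in> carrier_vec k" "N x = 1"
    using u_carrier \<open>0 < N u\<close> is_norm_on_smult[OF N u_carrier]
    by (auto simp: x_def norm_divide)
  have "A *\<^sub>v x = \<mu> \<cdot>\<^sub>v x"
    using mult_mat_vec[OF A u_carrier] Au by (auto simp: x_def mult.commute)
  then have "cmod \<mu> = N (A *\<^sub>v x)" using is_norm_on_smult[OF N x(1)] x(2) by simp
  then show ?thesis
    unfolding op_norm_def using x by (intro cSup_upper op_norm_bdd_above[OF N A]) auto
qed

lemma minv_inverse:
  assumes A: "A \<in> carrier_mat k k" and inv: "invertible_mat A"
  shows "minv A \<in> carrier_mat k k" "A * minv A = 1\<^sub>m k" "minv A * A = 1\<^sub>m k"
proof -
  obtain B where AB: "A * B = 1\<^sub>m (dim_row A)" and BA: "B * A = 1\<^sub>m (dim_row B)"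
    using inv unfolding invertible_mat_def inverts_mat_def by blast
  then have "B \<in> carrier_mat k k" using A
    by (metis carrier_matD carrier_matI index_mult_mat(2,3) index_one_mat(2,3))
  then have "\<exists>B. B \<in> carrier_mat (dim_row A) (dim_row A) \<and> A * B = 1\<^sub>m (dim_row A) \<and> B * A = 1\<^sub>m (dim_row A)"
    using AB BA A by auto
  from someI_ex[OF this] A
  show "minv A \<in> carrier_mat k k" "A * minv A = 1\<^sub>m k" "minv A * A = 1\<^sub>m k"
    unfolding minv_def by auto
qed

lemma mult_mat_vec_cancel:
  fixes A B :: "'a :: semiring_1 mat"
  assumes "A \<in> carrier_mat k k" "B \<in> carrier_mat k k" "A * B = 1\<^sub>m k" "w \<in> carrier_vec k"
  shows "A *\<^sub>v (B *\<^sub>v w) = w"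
  using assoc_mult_mat_vec[of A k k B k w] assms by simp

lemma mult_mat_vec_zero:
  "(A :: 'a :: semiring_0 mat) \<in> carrier_mat p k \<Longrightarrow> A *\<^sub>v 0\<^sub>v k = 0\<^sub>v p"
  by (rule eq_vecI) (auto simp: scalar_prod_def)

lemma mat_eq_mat_diag: "mat k k (\<lambda>(l, m). if l = m then f l else 0) = mat_diag k f"
  by (rule eq_matI) (auto simp: mat_diag_def)

lemma index_mat_diag_mult_vec:
  fixes f :: "nat \<Rightarrow> 'a :: semiring_0"
  assumes "w \<in> carrier_vec k" "l < k"
  shows "(mat_diag k f *\<^sub>v w) $ l = f l * w $ l"
proof -
  have "(mat_diag k f *\<^sub>v w) $ l = (\<Sum>m<k. mat_diag k f $$ (l, m) * w $ m)"
    by (rule index_mult_mat_vec_sum[OF mat_diag_dim assms])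
  also have "\<dots> = (\<Sum>m<k. (if l = m then f m else 0) * w $ m)"
    using assms by (intro sum.cong) (auto simp: mat_diag_def)
  also have "\<dots> = f l * w $ l"
    using assms(2) by (simp add: if_distrib[of "\<lambda>c. c * _"] cong: if_cong)
  finally show ?thesis .
qed

definition diag_sylvester_sol ::
    "nat \<Rightarrow> nat \<Rightarrow> (nat \<Rightarrow> 'a :: field) \<Rightarrow> (nat \<Rightarrow> 'a) \<Rightarrow> 'a mat \<Rightarrow> 'a mat" where
  "diag_sylvester_sol p q \<alpha> \<beta> M = mat p q (\<lambda>(l, m). M $$ (l, m) * inverse (1 - \<beta> m / \<alpha> l))"

lemma diag_sylvester_sol_carrier [simp]: "diag_sylvester_sol p q \<alpha> \<beta> M \<in> carrier_mat p q"
  by (simp add: diag_sylvester_sol_def)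

lemma diag_sylvester_sol:
  assumes M: "M \<in> carrier_mat p q" and \<alpha>: "\<And>l. l < p \<Longrightarrow> \<alpha> l \<noteq> 0"
    and disj: "\<And>l m. l < p \<Longrightarrow> m < q \<Longrightarrow> \<alpha> l \<noteq> \<beta> m"
  defines "X \<equiv> diag_sylvester_sol p q \<alpha> \<beta> M"
  shows "mat_diag p \<alpha> * X = X * mat_diag q \<beta> + mat_diag p \<alpha> * M"
proof (rule eq_matI)
  fix l m assume "l < dim_row (X * mat_diag q \<beta> + mat_diag p \<alpha> * M)"
    "m < dim_col (X * mat_diag q \<beta> + mat_diag p \<alpha> * M)"
  then have l: "l < p" and m: "m < q" using M by (auto simp: X_def mat_diag_def)
  have "\<alpha> l - \<beta> m \<noteq> 0" using disj[OF l m] by simp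
  then show "(mat_diag p \<alpha> * X) $$ (l, m) = (X * mat_diag q \<beta> + mat_diag p \<alpha> * M) $$ (l, m)"
    using l m M \<alpha>[OF l]
    by (simp add: X_def diag_sylvester_sol_def mat_diag_mult_left[of _ p q]
        mat_diag_mult_right[of _ p q] field_simps)
qed (use M in \<open>auto simp: X_def diag_sylvester_sol_def\<close>)

definition vec_sum :: "nat \<Rightarrow> 'b set \<Rightarrow> ('b \<Rightarrow> 'a :: comm_monoid_add vec) \<Rightarrow> 'a vec" where
  "vec_sum k J f = vec k (\<lambda>l. \<Sum>j\<in>J. f j $ l)"

lemma vec_sum_carrier [simp]: "vec_sum k J f \<in> carrier_vec k"
  and dim_vec_sum [simp]: "dim_vec (vec_sum k J f) = k"
  and index_vec_sum [simp]: "l < k \<Longrightarrow> vec_sum k J f $ l = (\<Sum>j\<in>J. f j $ l)"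
  by (auto simp: vec_sum_def)

lemma vec_sum_cong: "(\<And>j. j \<in> J \<Longrightarrow> f j = g j) \<Longrightarrow> vec_sum k J f = vec_sum k J g"
  unfolding vec_sum_def by (metis (no_types, lifting) sum.cong)

lemma mult_mat_vec_sum:
  fixes A :: "'a :: comm_semiring_0 mat"
  assumes A: "A \<in> carrier_mat p k" and f: "\<And>j. j \<in> J \<Longrightarrow> f j \<in> carrier_vec k"
  shows "A *\<^sub>v vec_sum k J f = vec_sum p J (\<lambda>j. A *\<^sub>v f j)"
proof (rule eq_vecI)
  fix l assume "l < dim_vec (vec_sum p J (\<lambda>j. A *\<^sub>v f j))"
  then have l: "l < p" by simp
  have "(A *\<^sub>v vec_sum k J f) $ l = (\<Sum>m<k. \<Sum>j\<in>J. A $$ (l, m) * f j $ m)"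
    by (simp add: index_mult_mat_vec_sum[OF A _ l] sum_distrib_left)
  also have "\<dots> = (\<Sum>j\<in>J. (A *\<^sub>v f j) $ l)"
    by (subst sum.swap) (simp add: index_mult_mat_vec_sum[OF A f l])
  finally show "(A *\<^sub>v vec_sum k J f) $ l = vec_sum p J (\<lambda>j. A *\<^sub>v f j) $ l" using l by simp
qed (use A in simp)

lemma vec_sum_add:
  assumes "\<And>j. j \<in> J \<Longrightarrow> f j \<in> carrier_vec k" "\<And>j. j \<in> J \<Longrightarrow> g j \<in> carrier_vec k"
  shows "vec_sum k J (\<lambda>j. f j + g j) = vec_sum k J f + vec_sum k J g"
  by (rule eq_vecI) (use assms in \<open>auto simp flip: sum.distrib intro!: sum.cong index_add_vec
        dest!: carrier_vecD\<close>)

section \<open>The perturbation conjugates the cascade to its diagonal part\<close>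

declare pert.simps [simp del]

locale diagonalized_cascade =
  fixes n :: nat and d :: "nat \<Rightarrow> nat"
    and L C V :: "nat \<Rightarrow> complex mat"
    and lam :: "nat \<Rightarrow> nat \<Rightarrow> complex"
  assumes L_carrier: "\<And>i. i \<in> {1..n} \<Longrightarrow> L i \<in> carrier_mat (d i) (d i)"
    and C_carrier: "\<And>i. i \<in> {2..n} \<Longrightarrow> C i \<in> carrier_mat (d i) (d (i - 1))"
    and L_invertible: "\<And>i. i \<in> {1..n} \<Longrightarrow> invertible_mat (L i)"
    and V_carrier: "\<And>i. i \<in> {1..n} \<Longrightarrow> V i \<in> carrier_mat (d i) (d i)"
    and V_invertible: "\<And>i. i \<in> {1..n} \<Longrightarrow> invertible_mat (V i)"
    and diagonalize: "\<And>i. i \<in> {1..n} \<Longrightarrow>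
          L i * V i = V i * mat (d i) (d i) (\<lambda>(l, m). if l = m then lam i l else 0)"
    and spectra_disjoint: "\<And>i j. i \<in> {1..n} \<Longrightarrow> j \<in> {1..n} \<Longrightarrow> i \<noteq> j \<Longrightarrow>
          spectrum (L i) \<inter> spectrum (L j) = {}"
begin

abbreviation "Vinv i \<equiv> minv (V i)"
abbreviation "Linv i \<equiv> minv (L i)"
abbreviation "Lam i \<equiv> mat_diag (d i) (lam i)"
abbreviation "D \<equiv> Dmat d L C V lam"

lemma Vinv_carrier [simp]: "i \<in> {1..n} \<Longrightarrow> Vinv i \<in> carrier_mat (d i) (d i)"
  and V_Vinv: "i \<in> {1..n} \<Longrightarrow> V i * Vinv i = 1\<^sub>m (d i)"
  and Vinv_V: "i \<in> {1..n} \<Longrightarrow> Vinv i * V i = 1\<^sub>m (d i)"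
  using minv_inverse[OF V_carrier V_invertible] by blast+

lemma Linv_carrier [simp]: "i \<in> {1..n} \<Longrightarrow> Linv i \<in> carrier_mat (d i) (d i)"
  and L_Linv: "i \<in> {1..n} \<Longrightarrow> L i * Linv i = 1\<^sub>m (d i)"
  and Linv_L: "i \<in> {1..n} \<Longrightarrow> Linv i * L i = 1\<^sub>m (d i)"
  using minv_inverse[OF L_carrier L_invertible] by blast+

declare L_carrier [simp] V_carrier [simp]

lemma block_mult_vec_carrier [simp]:
  assumes "i \<in> {1..n}" "w \<in> carrier_vec (d i)"
  shows "L i *\<^sub>v w \<in> carrier_vec (d i)" "V i *\<^sub>v w \<in> carrier_vec (d i)"
    "Linv i *\<^sub>v w \<in> carrier_vec (d i)" "Vinv i *\<^sub>v w \<in> carrier_vec (d i)"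
    "Lam i *\<^sub>v w \<in> carrier_vec (d i)"
  using assms by (intro mult_mat_vec_carrier[of _ "d i" "d i"]; simp)+

lemma L_V_vec:
  assumes "i \<in> {1..n}" "w \<in> carrier_vec (d i)"
  shows "L i *\<^sub>v (V i *\<^sub>v w) = V i *\<^sub>v (Lam i *\<^sub>v w)"
proof -
  have "L i *\<^sub>v (V i *\<^sub>v w) = (L i * V i) *\<^sub>v w"
    using assms by (simp add: assoc_mult_mat_vec[of _ "d i" "d i" _ "d i"])
  also have "\<dots> = (V i * Lam i) *\<^sub>v w" using diagonalize[OF assms(1)] by (simp add: mat_eq_mat_diag)
  finally show ?thesis using assms by (simp add: assoc_mult_mat_vec[of _ "d i" "d i" _ "d i"])
qed

lemma Vinv_L_vec:
  assumes "i \<in> {1..n}" "v \<in> carrier_vec (d i)"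
  shows "Vinv i *\<^sub>v (L i *\<^sub>v v) = Lam i *\<^sub>v (Vinv i *\<^sub>v v)"
proof -
  have "L i *\<^sub>v v = L i *\<^sub>v (V i *\<^sub>v (Vinv i *\<^sub>v v))"
    using mult_mat_vec_cancel[OF _ _ V_Vinv] assms by simp
  also have "\<dots> = V i *\<^sub>v (Lam i *\<^sub>v (Vinv i *\<^sub>v v))" using L_V_vec assms by simp
  finally have "L i *\<^sub>v v = V i *\<^sub>v (Lam i *\<^sub>v (Vinv i *\<^sub>v v))" .
  then show ?thesis using mult_mat_vec_cancel[OF _ _ Vinv_V] assms by simp
qed

lemma eigenvector_L:
  assumes i: "i \<in> {1..n}" and l: "l < d i"
  shows "eigenvector (L i) (V i *\<^sub>v unit_vec (d i) l) (lam i l)"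
proof -
  have "Vinv i *\<^sub>v (V i *\<^sub>v unit_vec (d i) l) = unit_vec (d i) l"
    using mult_mat_vec_cancel[OF _ _ Vinv_V] i by simp
  moreover have "unit_vec (d i) l \<noteq> 0\<^sub>v (d i)"
    using l by (metis index_unit_vec(1) index_zero_vec(1) zero_neq_one)
  ultimately have "V i *\<^sub>v unit_vec (d i) l \<noteq> 0\<^sub>v (d i)"
    using mult_mat_vec_zero[OF Vinv_carrier[OF i]] by metis
  moreover have "Lam i *\<^sub>v unit_vec (d i) l = lam i l \<cdot>\<^sub>v unit_vec (d i) l"
    by (rule eq_vecI) (use l carrier_matD[OF mat_diag_dim] in \<open>auto simp: index_mat_diag_mult_vec\<close>)
  then have "L i *\<^sub>v (V i *\<^sub>v unit_vec (d i) l) = lam i l \<cdot>\<^sub>v (V i *\<^sub>v unit_vec (d i) l)"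
    using L_V_vec[OF i, of "unit_vec (d i) l"] mult_mat_vec[of "V i" "d i" "d i"] i by simp
  ultimately show ?thesis
    using i carrier_matD[OF L_carrier[OF i]] unfolding eigenvector_def by simp
qed

lemma lam_in_spectrum: "i \<in> {1..n} \<Longrightarrow> l < d i \<Longrightarrow> lam i l \<in> spectrum (L i)"
  using eigenvector_L unfolding spectrum_def eigenvalue_def by blast

lemma lam_nonzero:
  assumes i: "i \<in> {1..n}" and l: "l < d i"
  shows "lam i l \<noteq> 0"
proof
  assume "lam i l = 0"
  define u where "u = V i *\<^sub>v unit_vec (d i) l"
  have u: "u \<in> carrier_vec (d i)" "u \<noteq> 0\<^sub>v (d i)" "L i *\<^sub>v u = 0 \<cdot>\<^sub>v u"
    using eigenvector_L[OF i l] \<open>lam i l = 0\<close> carrier_matD[OF L_carrier[OF i]]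
    unfolding u_def eigenvector_def by auto
  have "u = Linv i *\<^sub>v (L i *\<^sub>v u)"
    using mult_mat_vec_cancel[OF Linv_carrier[OF i] L_carrier[OF i] Linv_L[OF i] u(1)] by simp
  also have "L i *\<^sub>v u = 0\<^sub>v (d i)" using u(1,3) by auto
  finally show False using u(2) mult_mat_vec_zero[OF Linv_carrier[OF i]] by simp
qed

lemma lam_distinct:
  assumes "i \<in> {1..n}" "j \<in> {1..n}" "i \<noteq> j" "l < d i" "m < d j"
  shows "lam i l \<noteq> lam j m"
  using spectra_disjoint[OF assms(1-3)] lam_in_spectrum[OF assms(1,4)] lam_in_spectrum[OF assms(2,5)]
  by auto

lemma Dmat_diag [simp]: "D i i = 1\<^sub>m (d i)"
  by (cases i) auto

abbreviation "Ccoup i j \<equiv> Vinv i * C i * D (i - 1) j * V j"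
abbreviation "Ctilde i j \<equiv> diag_sylvester_sol (d i) (d j) (lam i) (lam j) (Ccoup i j)"

lemma Dmat_below_diag: "j < i \<Longrightarrow> D i j = Linv i * V i * Ctilde i j * Vinv j"
  by (cases i) (auto simp: Let_def diag_sylvester_sol_def)

lemma dim_row_Dmat [simp]:
  assumes "i \<in> {1..n}"
  shows "dim_row (D i j) = d i"
proof -
  obtain i' where "i = Suc i'" using assms by (cases i) auto
  then show ?thesis using carrier_matD(1)[OF Linv_carrier[OF assms]] by (simp add: Let_def)
qed

lemma Dmat_carrier:
  assumes "1 \<le> j" "j \<le> i" "i \<le> n"
  shows "D i j \<in> carrier_mat (d i) (d j)"
proof (cases "j = i")
  case False
  then have "j < i" using assms by simp
  then show ?thesis
    unfolding Dmat_below_diag[OF \<open>j < i\<close>] using assms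
    by (intro mult_carrier_mat[OF mult_carrier_mat[OF mult_carrier_mat[OF Linv_carrier V_carrier]
          diag_sylvester_sol_carrier] Vinv_carrier]) auto
qed simp

lemma Dmat_mult_vec_carrier [simp]:
  "1 \<le> j \<Longrightarrow> j \<le> i \<Longrightarrow> i \<le> n \<Longrightarrow> w \<in> carrier_vec (d j) \<Longrightarrow> D i j *\<^sub>v w \<in> carrier_vec (d i)"
  using mult_mat_vec_carrier[OF Dmat_carrier] by blast

lemma C_mult_vec_carrier [simp]:
  "i \<in> {2..n} \<Longrightarrow> w \<in> carrier_vec (d (i - 1)) \<Longrightarrow> C i *\<^sub>v w \<in> carrier_vec (d i)"
  using mult_mat_vec_carrier[OF C_carrier] by blast

lemma Ccoup_carrier:
  assumes i: "i \<in> {2..n}" and j: "j \<in> {1..<i}"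
  shows "Ccoup i j \<in> carrier_mat (d i) (d j)"
proof -
  have "Vinv i * C i \<in> carrier_mat (d i) (d (i - 1))"
    using i by (intro mult_carrier_mat[OF Vinv_carrier C_carrier]) auto
  moreover have "D (i - 1) j \<in> carrier_mat (d (i - 1)) (d j)" using i j by (intro Dmat_carrier) auto
  ultimately show ?thesis using i j by (intro mult_carrier_mat[OF mult_carrier_mat V_carrier]) auto
qed

lemma Ctilde_sylvester:
  assumes i: "i \<in> {2..n}" and j: "j \<in> {1..<i}" and u: "u \<in> carrier_vec (d j)"
  shows "Lam i *\<^sub>v (Ctilde i j *\<^sub>v u) = Ctilde i j *\<^sub>v (Lam j *\<^sub>v u) + Lam i *\<^sub>v (Ccoup i j *\<^sub>v u)"
proof -
  have iI: "i \<in> {1..n}" and jI: "j \<in> {1..n}" using i j by auto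
  note M = Ccoup_carrier[OF i j] and X = diag_sylvester_sol_carrier
  have mat_eq: "Lam i * Ctilde i j = Ctilde i j * Lam j + Lam i * Ccoup i j"
    using M lam_nonzero[OF iI] lam_distinct[OF iI jI] j by (intro diag_sylvester_sol) auto
  have "Lam i *\<^sub>v (Ctilde i j *\<^sub>v u) = (Ctilde i j * Lam j + Lam i * Ccoup i j) *\<^sub>v u"
    unfolding mat_eq[symmetric] by (rule assoc_mult_mat_vec[OF mat_diag_dim X u, symmetric])
  also have "\<dots> = (Ctilde i j * Lam j) *\<^sub>v u + (Lam i * Ccoup i j) *\<^sub>v u"
    by (rule add_mult_distrib_mat_vec[OF mult_carrier_mat[OF X mat_diag_dim]
          mult_carrier_mat[OF mat_diag_dim M] u])
  finally show ?thesis
    using assoc_mult_mat_vec[OF X mat_diag_dim u] assoc_mult_mat_vec[OF mat_diag_dim M u] by simp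
qed

lemma Dmat_below_diag_mult_vec:
  assumes i: "i \<in> {1..n}" and j: "j \<in> {1..<i}" and w: "w \<in> carrier_vec (d j)"
  shows "D i j *\<^sub>v w = Linv i *\<^sub>v (V i *\<^sub>v (Ctilde i j *\<^sub>v (Vinv j *\<^sub>v w)))"
proof -
  have jI: "j \<in> {1..n}" and "j < i" using i j by auto
  have LV: "Linv i * V i \<in> carrier_mat (d i) (d i)"
    using mult_carrier_mat[OF Linv_carrier[OF i] V_carrier[OF i]] .
  have LVX: "Linv i * V i * Ctilde i j \<in> carrier_mat (d i) (d j)"
    using mult_carrier_mat[OF LV diag_sylvester_sol_carrier] .
  have u: "Vinv j *\<^sub>v w \<in> carrier_vec (d j)" using jI w by simp
  have Xu: "Ctilde i j *\<^sub>v (Vinv j *\<^sub>v w) \<in> carrier_vec (d i)"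
    using mult_mat_vec_carrier[OF diag_sylvester_sol_carrier u] .
  show ?thesis
    unfolding Dmat_below_diag[OF \<open>j < i\<close>]
    by (simp only: assoc_mult_mat_vec[OF LVX Vinv_carrier[OF jI] w]
        assoc_mult_mat_vec[OF LV diag_sylvester_sol_carrier u]
        assoc_mult_mat_vec[OF Linv_carrier[OF i] V_carrier[OF i] Xu])
qed

lemma C_mult_Dmat_mult_vec:
  assumes i: "i \<in> {2..n}" and j: "j \<in> {1..<i}" and v: "v \<in> carrier_vec (d j)"
  shows "C i *\<^sub>v (D (i - 1) j *\<^sub>v v) = V i *\<^sub>v (Ccoup i j *\<^sub>v (Vinv j *\<^sub>v v))"
proof -
  have iI: "i \<in> {1..n}" and jI: "j \<in> {1..n}" using i j by auto
  have C: "C i \<in> carrier_mat (d i) (d (i - 1))" using C_carrier[OF i] .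
  have D': "D (i - 1) j \<in> carrier_mat (d (i - 1)) (d j)" using i j by (intro Dmat_carrier) auto
  have VC: "Vinv i * C i \<in> carrier_mat (d i) (d (i - 1))"
    using mult_carrier_mat[OF Vinv_carrier[OF iI] C] .
  have VCD: "Vinv i * C i * D (i - 1) j \<in> carrier_mat (d i) (d j)"
    using mult_carrier_mat[OF VC D'] .
  have u: "Vinv j *\<^sub>v v \<in> carrier_vec (d j)" using jI v by simp
  have "Ccoup i j *\<^sub>v (Vinv j *\<^sub>v v) = Vinv i *\<^sub>v (C i *\<^sub>v (D (i - 1) j *\<^sub>v (V j *\<^sub>v (Vinv j *\<^sub>v v))))"
    using assoc_mult_mat_vec[OF VCD V_carrier[OF jI] u] assoc_mult_mat_vec[OF VC D']
      assoc_mult_mat_vec[OF Vinv_carrier[OF iI] C] u jI D' by simp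
  also have "V j *\<^sub>v (Vinv j *\<^sub>v v) = v"
    using mult_mat_vec_cancel[OF V_carrier Vinv_carrier V_Vinv, of j] jI v by simp
  finally show ?thesis
    using mult_mat_vec_cancel[OF V_carrier Vinv_carrier V_Vinv, of i] iI C D' v by simp
qed

lemma Dmat_sylvester:
  assumes i: "i \<in> {2..n}" and j: "j \<in> {1..<i}" and v: "v \<in> carrier_vec (d j)"
  shows "L i *\<^sub>v (D i j *\<^sub>v v) = D i j *\<^sub>v (L j *\<^sub>v v) + C i *\<^sub>v (D (i - 1) j *\<^sub>v v)"
proof -
  have iI: "i \<in> {1..n}" and jI: "j \<in> {1..n}" using i j by auto
  define u where "u = Vinv j *\<^sub>v v"
  have u: "u \<in> carrier_vec (d j)" using jI v by (simp add: u_def)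
  have XLu: "Ctilde i j *\<^sub>v (Lam j *\<^sub>v u) \<in> carrier_vec (d i)"
    by (rule mult_mat_vec_carrier[OF diag_sylvester_sol_carrier]) (use u jI in simp)
  have Mu: "Ccoup i j *\<^sub>v u \<in> carrier_vec (d i)"
    using mult_mat_vec_carrier[OF Ccoup_carrier[OF i j] u] .
  have Xu: "Ctilde i j *\<^sub>v u \<in> carrier_vec (d i)"
    using mult_mat_vec_carrier[OF diag_sylvester_sol_carrier u] .
  have "D i j *\<^sub>v (L j *\<^sub>v v) = Linv i *\<^sub>v (V i *\<^sub>v (Ctilde i j *\<^sub>v (Lam j *\<^sub>v u)))"
    using Dmat_below_diag_mult_vec[OF iI j, of "L j *\<^sub>v v"] Vinv_L_vec[OF jI v] jI v
    by (simp add: u_def)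
  then have "L i *\<^sub>v (D i j *\<^sub>v (L j *\<^sub>v v) + C i *\<^sub>v (D (i - 1) j *\<^sub>v v))
      = V i *\<^sub>v (Ctilde i j *\<^sub>v (Lam j *\<^sub>v u)) + V i *\<^sub>v (Lam i *\<^sub>v (Ccoup i j *\<^sub>v u))"
    unfolding C_mult_Dmat_mult_vec[OF i j v] u_def[symmetric]
    using mult_mat_vec_cancel[OF L_carrier Linv_carrier L_Linv, of i] L_V_vec[OF iI Mu] iI XLu Mu
    by (simp add: mult_add_distrib_mat_vec[OF L_carrier[OF iI]])
  also have "\<dots> = V i *\<^sub>v (Lam i *\<^sub>v (Ctilde i j *\<^sub>v u))"
    unfolding Ctilde_sylvester[OF i j u] using iI XLu Mu
    by (simp add: mult_add_distrib_mat_vec[OF V_carrier[OF iI]])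
  also have "\<dots> = L i *\<^sub>v (L i *\<^sub>v (D i j *\<^sub>v v))"
    unfolding Dmat_below_diag_mult_vec[OF iI j v] u_def[symmetric]
    using L_V_vec[OF iI Xu] mult_mat_vec_cancel[OF L_carrier Linv_carrier L_Linv, of i] iI Xu by simp
  finally have "Linv i *\<^sub>v (L i *\<^sub>v (D i j *\<^sub>v (L j *\<^sub>v v) + C i *\<^sub>v (D (i - 1) j *\<^sub>v v)))
      = Linv i *\<^sub>v (L i *\<^sub>v (L i *\<^sub>v (D i j *\<^sub>v v)))" by (rule arg_cong)
  moreover have "D i j *\<^sub>v (L j *\<^sub>v v) + C i *\<^sub>v (D (i - 1) j *\<^sub>v v) \<in> carrier_vec (d i)"
    and "L i *\<^sub>v (D i j *\<^sub>v v) \<in> carrier_vec (d i)"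
    using i j v jI by auto
  ultimately show ?thesis
    by (metis mult_mat_vec_cancel[OF Linv_carrier[OF iI] L_carrier[OF iI] Linv_L[OF iI]])
qed

abbreviation "block_vec x \<equiv> \<forall>k\<in>{1..n}. x k \<in> carrier_vec (d k)"
abbreviation "P i x \<equiv> pert d D i x"

lemma pert_le_1 [simp]: "i \<le> 1 \<Longrightarrow> P i x = x i"
  by (subst pert.simps) simp

lemma pert_unfold:
  assumes i: "i \<in> {2..n}" and x: "x i \<in> carrier_vec (d i)"
  shows "P i x = x i + vec_sum (d i) {1..<i} (\<lambda>j. (-1) ^ (i - 1 - j) \<cdot>\<^sub>v (D i j *\<^sub>v P j x))"
  using assms by (subst pert.simps) (auto intro!: eq_vecI sum.cong)

lemma pert_carrier: "block_vec x \<Longrightarrow> i \<in> {1..n} \<Longrightarrow> P i x \<in> carrier_vec (d i)"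
  by (subst pert.simps) auto

lemma Lin_block_vec:
  assumes x: "block_vec x"
  shows "block_vec (Lin L C x)"
proof
  fix k assume k: "k \<in> {1..n}"
  show "Lin L C x k \<in> carrier_vec (d k)"
  proof (cases "k = 1")
    case False
    then have "k \<in> {2..n}" "k - 1 \<in> {1..n}" using k by auto
    then show ?thesis
      using x k mult_mat_vec_carrier[OF C_carrier] False by (auto simp: Lin_def)
  qed (use x k in \<open>simp add: Lin_def\<close>)
qed

lemma Lin_iter_block_vec: "block_vec x \<Longrightarrow> block_vec ((Lin L C ^^ t) x)"
  by (induction t) (simp_all add: Lin_block_vec)

lemma pert_inversion:
  assumes x: "block_vec x" and k: "k \<in> {1..n}"
  shows "vec_sum (d k) {1..k} (\<lambda>j. (-1) ^ (k - j) \<cdot>\<^sub>v (D k j *\<^sub>v P j x)) = x k"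
proof (rule eq_vecI)
  fix l assume "l < dim_vec (x k)"
  then have l: "l < d k" using bspec[OF x k] by auto
  define a where "a j = (D k j *\<^sub>v P j x) $ l" for j
  have "vec_sum (d k) {1..k} (\<lambda>j. (-1) ^ (k - j) \<cdot>\<^sub>v (D k j *\<^sub>v P j x)) $ l
      = (\<Sum>j\<in>{1..<k}. (-1) ^ (k - j) * a j) + P k x $ l"
    using l k pert_carrier[OF x k] Dmat_carrier[of _ k]
    by (simp add: a_def atLeastLessThanSuc_atLeastAtMost[symmetric] sum.atLeastLessThan_Suc)
  also have "\<dots> = x k $ l"
  proof (cases "k = 1")
    case False
    have "(-1) ^ (k - j) = - ((-1) ^ (k - 1 - j) :: complex)" if "j \<in> {1..<k}" for j
    proof -
      have "k - j = Suc (k - 1 - j)" using that by auto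
      then show ?thesis by simp
    qed
    then have "(\<Sum>j\<in>{1..<k}. (-1) ^ (k - j) * a j) = - (\<Sum>j\<in>{1..<k}. (-1) ^ (k - 1 - j) * a j)"
      by (simp add: sum_negf)
    moreover have "P k x $ l = x k $ l + (\<Sum>j\<in>{1..<k}. (-1) ^ (k - 1 - j) * a j)"
      using False k x l pert_carrier[OF x] Dmat_carrier[of _ k]
      by (simp add: pert_unfold[of k] a_def)
    ultimately show ?thesis by simp
  qed simp
  finally show "vec_sum (d k) {1..k} (\<lambda>j. (-1) ^ (k - j) \<cdot>\<^sub>v (D k j *\<^sub>v P j x)) $ l = x k $ l" .
qed (use bspec[OF x k] in auto)

lemma C_mult_block_below:
  assumes x: "block_vec x" and i: "i \<in> {2..n}"
  shows "C i *\<^sub>v x (i - 1)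
    = vec_sum (d i) {1..<i} (\<lambda>j. (-1) ^ (i - 1 - j) \<cdot>\<^sub>v (C i *\<^sub>v (D (i - 1) j *\<^sub>v P j x)))"
proof -
  have DP: "D (i - 1) j *\<^sub>v P j x \<in> carrier_vec (d (i - 1))" if "j \<in> {1..<i}" for j
    using that i pert_carrier[OF x, of j] by (intro mult_mat_vec_carrier[OF Dmat_carrier]) auto
  have "{1..i - 1} = {1..<i}" and i1: "i - 1 \<in> {1..n}" using i by auto
  then have "C i *\<^sub>v x (i - 1)
      = C i *\<^sub>v vec_sum (d (i - 1)) {1..<i} (\<lambda>j. (-1) ^ (i - 1 - j) \<cdot>\<^sub>v (D (i - 1) j *\<^sub>v P j x))"
    using pert_inversion[OF x i1] by simp
  also have "\<dots> = vec_sum (d i) {1..<i} (\<lambda>j. C i *\<^sub>v ((-1) ^ (i - 1 - j) \<cdot>\<^sub>v (D (i - 1) j *\<^sub>v P j x)))"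
    using DP by (intro mult_mat_vec_sum[OF C_carrier[OF i]]) auto
  also have "\<dots> = vec_sum (d i) {1..<i} (\<lambda>j. (-1) ^ (i - 1 - j) \<cdot>\<^sub>v (C i *\<^sub>v (D (i - 1) j *\<^sub>v P j x)))"
    by (intro vec_sum_cong mult_mat_vec[OF C_carrier[OF i] DP])
  finally show ?thesis .
qed

lemma L_mult_pert:
  assumes x: "block_vec x" and i: "i \<in> {2..n}"
  shows "L i *\<^sub>v P i x = L i *\<^sub>v x i
    + (vec_sum (d i) {1..<i} (\<lambda>j. (-1) ^ (i - 1 - j) \<cdot>\<^sub>v (D i j *\<^sub>v (L j *\<^sub>v P j x)))
     + vec_sum (d i) {1..<i} (\<lambda>j. (-1) ^ (i - 1 - j) \<cdot>\<^sub>v (C i *\<^sub>v (D (i - 1) j *\<^sub>v P j x))))"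
proof -
  have iI: "i \<in> {1..n}" and xi: "x i \<in> carrier_vec (d i)" using x i by auto
  have Pj: "P j x \<in> carrier_vec (d j)" and DP: "D i j *\<^sub>v P j x \<in> carrier_vec (d i)"
    and DLP: "D i j *\<^sub>v (L j *\<^sub>v P j x) \<in> carrier_vec (d i)"
    and CDP: "C i *\<^sub>v (D (i - 1) j *\<^sub>v P j x) \<in> carrier_vec (d i)" if "j \<in> {1..<i}" for j
    using that i pert_carrier[OF x, of j] by auto
  have "L i *\<^sub>v P i x
      = L i *\<^sub>v x i + L i *\<^sub>v vec_sum (d i) {1..<i} (\<lambda>j. (-1) ^ (i - 1 - j) \<cdot>\<^sub>v (D i j *\<^sub>v P j x))"
    unfolding pert_unfold[of i x, OF i xi]
    by (rule mult_add_distrib_mat_vec[OF L_carrier[OF iI] xi]) simp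
  also have "L i *\<^sub>v vec_sum (d i) {1..<i} (\<lambda>j. (-1) ^ (i - 1 - j) \<cdot>\<^sub>v (D i j *\<^sub>v P j x))
      = vec_sum (d i) {1..<i} (\<lambda>j. L i *\<^sub>v ((-1) ^ (i - 1 - j) \<cdot>\<^sub>v (D i j *\<^sub>v P j x)))"
    using DP by (intro mult_mat_vec_sum[OF L_carrier[OF iI]]) auto
  also have "\<dots> = vec_sum (d i) {1..<i} (\<lambda>j. (-1) ^ (i - 1 - j) \<cdot>\<^sub>v (D i j *\<^sub>v (L j *\<^sub>v P j x))
      + (-1) ^ (i - 1 - j) \<cdot>\<^sub>v (C i *\<^sub>v (D (i - 1) j *\<^sub>v P j x)))"
  proof (intro vec_sum_cong)
    fix j assume j: "j \<in> {1..<i}"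
    show "L i *\<^sub>v ((-1) ^ (i - 1 - j) \<cdot>\<^sub>v (D i j *\<^sub>v P j x))
        = (-1) ^ (i - 1 - j) \<cdot>\<^sub>v (D i j *\<^sub>v (L j *\<^sub>v P j x))
          + (-1) ^ (i - 1 - j) \<cdot>\<^sub>v (C i *\<^sub>v (D (i - 1) j *\<^sub>v P j x))"
      by (simp only: mult_mat_vec[OF L_carrier[OF iI] DP[OF j]] Dmat_sylvester[OF i j Pj[OF j]]
          smult_add_distrib_vec[OF DLP[OF j] CDP[OF j]])
  qed
  also have "\<dots> = vec_sum (d i) {1..<i} (\<lambda>j. (-1) ^ (i - 1 - j) \<cdot>\<^sub>v (D i j *\<^sub>v (L j *\<^sub>v P j x)))
      + vec_sum (d i) {1..<i} (\<lambda>j. (-1) ^ (i - 1 - j) \<cdot>\<^sub>v (C i *\<^sub>v (D (i - 1) j *\<^sub>v P j x)))"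
    using DLP CDP by (intro vec_sum_add) auto
  finally show ?thesis .
qed

lemma pert_Lin:
  assumes x: "block_vec x" and i: "i \<in> {1..n}"
  shows "P i (Lin L C x) = L i *\<^sub>v P i x"
  using i
proof (induction i rule: less_induct)
  case (less i)
  show ?case
  proof (cases "i = 1")
    case True
    then show ?thesis by (simp add: Lin_def)
  next
    case False
    then have i: "i \<in> {2..n}" and iI: "i \<in> {1..n}" using less.prems by auto
    define A where "A = vec_sum (d i) {1..<i} (\<lambda>j. (-1) ^ (i - 1 - j) \<cdot>\<^sub>v (D i j *\<^sub>v (L j *\<^sub>v P j x)))"
    define B where "B = vec_sum (d i) {1..<i} (\<lambda>j. (-1) ^ (i - 1 - j) \<cdot>\<^sub>v (C i *\<^sub>v (D (i - 1) j *\<^sub>v P j x)))"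
    have Lin_i: "Lin L C x i = L i *\<^sub>v x i + C i *\<^sub>v x (i - 1)" using i by (simp add: Lin_def)
    have "vec_sum (d i) {1..<i} (\<lambda>j. (-1) ^ (i - 1 - j) \<cdot>\<^sub>v (D i j *\<^sub>v P j (Lin L C x))) = A"
      unfolding A_def using less.IH i by (intro vec_sum_cong) auto
    then have "P i (Lin L C x) = L i *\<^sub>v x i + C i *\<^sub>v x (i - 1) + A"
      using pert_unfold[of i "Lin L C x", OF i bspec[OF Lin_block_vec[OF x] iI]] by (simp add: Lin_i)
    also have "\<dots> = L i *\<^sub>v x i + B + A"
      unfolding C_mult_block_below[OF x i] B_def ..
    also have "\<dots> = L i *\<^sub>v x i + (A + B)"
    proof -
      have "L i *\<^sub>v x i \<in> carrier_vec (d i)" using x iI by simp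
      moreover have "A \<in> carrier_vec (d i)" "B \<in> carrier_vec (d i)" by (simp_all add: A_def B_def)
      ultimately show ?thesis by (metis assoc_add_vec comm_add_vec)
    qed
    also have "\<dots> = L i *\<^sub>v P i x"
      unfolding L_mult_pert[OF x i] A_def B_def ..
    finally show ?thesis .
  qed
qed

lemma Nom_iter_Suc: "(Nom L ^^ Suc t) Y i = L i *\<^sub>v (Nom L ^^ t) Y i"
  by (simp add: Nom_def)

lemma Nom_iter_carrier: "i \<in> {1..n} \<Longrightarrow> Y i \<in> carrier_vec (d i) \<Longrightarrow> (Nom L ^^ t) Y i \<in> carrier_vec (d i)"
  by (induction t) (simp_all only: Nom_iter_Suc funpow_0 mult_mat_vec_carrier[OF L_carrier])

lemma Nom_iter_pert:
  assumes x: "block_vec x" and i: "i \<in> {1..n}"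
  shows "(Nom L ^^ t) (pert_map d D x) i = P i ((Lin L C ^^ t) x)"
  using i
proof (induction t arbitrary: i)
  case (Suc t)
  then show ?case
    unfolding Nom_iter_Suc using pert_Lin[OF Lin_iter_block_vec[OF x] Suc.prems] by simp
qed (simp add: pert_map_def)

lemma pert_minus_block:
  assumes y: "block_vec y" and i: "i \<in> {1..n}" and l: "l < d i"
  shows "(P i y - y i) $ l = (\<Sum>j\<in>{1..<i}. (-1) ^ (i - 1 - j) * (D i j *\<^sub>v P j y) $ l)"
proof (cases "i = 1")
  case False
  then have "i \<in> {2..n}" using i by auto
  moreover have "D i j *\<^sub>v P j y \<in> carrier_vec (d i)" if "j \<in> {1..<i}" for j
    using that i pert_carrier[OF y, of j] by (intro mult_mat_vec_carrier[OF Dmat_carrier]) auto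
  ultimately show ?thesis using bspec[OF y i] l by (simp add: pert_unfold)
qed (use bspec[OF y i] l in simp)

lemma Lin_iter_minus_Nom_iter_pert:
  assumes x: "block_vec x" and i: "i \<in> {1..n}"
  shows "(Lin L C ^^ t) x i - (Nom L ^^ t) (pert_map d D x) i = vec (d i) (\<lambda>l.
    - (\<Sum>j\<in>{1..<i}. (-1) ^ (i - 1 - j) * (D i j *\<^sub>v (Nom L ^^ t) (pert_map d D x) j) $ l))"
proof -
  define y where "y = (Lin L C ^^ t) x"
  have y: "block_vec y" using Lin_iter_block_vec[OF x] by (simp add: y_def)
  have Nom_P: "(Nom L ^^ t) (pert_map d D x) j = P j y" if "j \<in> {1..n}" for j
    using Nom_iter_pert[OF x that] by (simp add: y_def)
  have "(y i - P i y) $ l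
      = - (\<Sum>j\<in>{1..<i}. (-1) ^ (i - 1 - j) * (D i j *\<^sub>v (Nom L ^^ t) (pert_map d D x) j) $ l)"
    if "l < d i" for l
  proof -
    have "(y i - P i y) $ l = - (P i y - y i) $ l"
      using that bspec[OF y i] pert_carrier[OF y i] by simp
    then show ?thesis
      unfolding pert_minus_block[OF y i that] using i Nom_P by (auto intro!: sum.cong)
  qed
  then show ?thesis
    unfolding y_def[symmetric] Nom_P[OF i] using bspec[OF y i] pert_carrier[OF y i]
    by (intro eq_vecI) auto
qed

end

section \<open>Decay of the lower blocks\<close>

locale norm_ordered_cascade = diagonalized_cascade +
  fixes N :: "nat \<Rightarrow> complex vec \<Rightarrow> real"
  assumes norms: "\<And>i. i \<in> {1..n} \<Longrightarrow> is_norm_on (d i) (N i)"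
    and op_norm_strict_mono: "\<And>i. i \<in> {1..<n} \<Longrightarrow>
          op_norm (N i) (d i) (L i) < op_norm (N (Suc i)) (d (Suc i)) (L (Suc i))"
    and op_norm_last_le_1: "op_norm (N n) (d n) (L n) \<le> 1"
begin

lemma op_norm_less_last:
  assumes j: "j \<in> {1..<n}"
  shows "op_norm (N j) (d j) (L j) < op_norm (N n) (d n) (L n)"
proof -
  have "j \<le> n - 1" using j by auto
  then show ?thesis
  proof (induction j rule: inc_induct)
    case base
    show ?case using j op_norm_strict_mono[of "n - 1"] by auto
  next
    case (step k)
    then have "k \<in> {1..<n}" using j by auto
    then show ?case using op_norm_strict_mono[of k] step.IH by linarith
  qed
qed

lemma lam_norm_less_1:
  assumes j: "j \<in> {1..<n}" and l: "l < d j"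
  shows "cmod (lam j l) < 1"
proof -
  have jI: "j \<in> {1..n}" using j by auto
  have "cmod (lam j l) \<le> op_norm (N j) (d j) (L j)"
    by (rule eigenvalue_norm_le_op_norm[OF norms[OF jI] L_carrier[OF jI] eigenvector_L[OF jI l]])
  also have "\<dots> < 1" using op_norm_less_last[OF j] op_norm_last_le_1 by linarith
  finally show ?thesis .
qed

lemma Vinv_Nom_iter:
  assumes j: "j \<in> {1..n}" and Y: "Y j \<in> carrier_vec (d j)"
  shows "Vinv j *\<^sub>v (Nom L ^^ t) Y j = mat_diag (d j) (\<lambda>l. lam j l ^ t) *\<^sub>v (Vinv j *\<^sub>v Y j)"
proof (induction t)
  case 0
  have "mat_diag (d j) (\<lambda>l. 1) *\<^sub>v (Vinv j *\<^sub>v Y j) = Vinv j *\<^sub>v Y j" using j Y by simp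
  then show ?case by simp
next
  case (Suc t)
  have "Vinv j *\<^sub>v (Nom L ^^ Suc t) Y j = Lam j *\<^sub>v (Vinv j *\<^sub>v (Nom L ^^ t) Y j)"
    unfolding Nom_iter_Suc by (rule Vinv_L_vec[OF j Nom_iter_carrier[of j Y, OF j Y]])
  also have "\<dots> = mat_diag (d j) (\<lambda>l. lam j l ^ Suc t) *\<^sub>v (Vinv j *\<^sub>v Y j)"
    using Suc.IH j Y
      assoc_mult_mat_vec[OF mat_diag_dim mat_diag_dim, of "Vinv j *\<^sub>v Y j" "d j" "lam j" "\<lambda>l. lam j l ^ t"]
    by simp
  finally show ?case .
qed

lemma Nom_iter_tendsto_0:
  assumes j: "j \<in> {1..<n}" and Y: "Y j \<in> carrier_vec (d j)" and a: "a < d j"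
  shows "(\<lambda>t. (Nom L ^^ t) Y j $ a) \<longlonglongrightarrow> 0"
proof -
  have jI: "j \<in> {1..n}" using j by auto
  define w where "w = Vinv j *\<^sub>v Y j"
  have w: "w \<in> carrier_vec (d j)" using jI Y by (simp add: w_def)
  have "(Nom L ^^ t) Y j $ a = (\<Sum>l<d j. V j $$ (a, l) * (lam j l ^ t * w $ l))" for t
  proof -
    have "(Nom L ^^ t) Y j = V j *\<^sub>v (Vinv j *\<^sub>v (Nom L ^^ t) Y j)"
      using mult_mat_vec_cancel[OF V_carrier[OF jI] Vinv_carrier[OF jI] V_Vinv[OF jI]
          Nom_iter_carrier[of j Y t, OF jI Y]] by simp
    also have "\<dots> = V j *\<^sub>v (mat_diag (d j) (\<lambda>l. lam j l ^ t) *\<^sub>v w)"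
      unfolding Vinv_Nom_iter[of j Y t, OF jI Y] w_def ..
    finally have Nom_eq: "(Nom L ^^ t) Y j = V j *\<^sub>v (mat_diag (d j) (\<lambda>l. lam j l ^ t) *\<^sub>v w)" .
    have "(V j *\<^sub>v (mat_diag (d j) (\<lambda>l. lam j l ^ t) *\<^sub>v w)) $ a
        = (\<Sum>l<d j. V j $$ (a, l) * (mat_diag (d j) (\<lambda>l. lam j l ^ t) *\<^sub>v w) $ l)"
      by (rule index_mult_mat_vec_sum[OF V_carrier[OF jI] mult_mat_vec_carrier[OF mat_diag_dim w] a])
    then show ?thesis unfolding Nom_eq by (simp add: index_mat_diag_mult_vec[OF w])
  qed
  moreover have "(\<lambda>t. \<Sum>l<d j. V j $$ (a, l) * (lam j l ^ t * w $ l)) \<longlonglongrightarrow> 0"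
  proof (rule tendsto_null_sum)
    fix l assume "l \<in> {..<d j}"
    then have "(\<lambda>t. lam j l ^ t) \<longlonglongrightarrow> 0"
      using lam_norm_less_1[OF j] by (intro LIMSEQ_power_zero) auto
    then show "(\<lambda>t. V j $$ (a, l) * (lam j l ^ t * w $ l)) \<longlonglongrightarrow> 0"
      by (intro tendsto_mult_right_zero tendsto_mult_left_zero)
  qed
  ultimately show ?thesis by simp
qed

lemma block_difference_tendsto_0:
  assumes x: "block_vec x" and i: "i \<in> {1..n}"
  shows "(\<lambda>t. N i ((Lin L C ^^ t) x i - (Nom L ^^ t) (pert_map d D x) i)) \<longlonglongrightarrow> 0"
  unfolding Lin_iter_minus_Nom_iter_pert[OF x i]
proof (rule is_norm_on_tendsto_0[OF norms[OF i]])
  fix l assume l: "l < d i"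
  define Y where "Y = pert_map d D x"
  have "(\<lambda>t. \<Sum>j\<in>{1..<i}. (-1) ^ (i - 1 - j) * (D i j *\<^sub>v (Nom L ^^ t) Y j) $ l) \<longlonglongrightarrow> 0"
  proof (intro tendsto_null_sum tendsto_mult_right_zero)
    fix j assume j: "j \<in> {1..<i}"
    then have jn: "j \<in> {1..<n}" and jI: "j \<in> {1..n}" using i by auto
    have Y: "Y j \<in> carrier_vec (d j)"
      using pert_carrier[OF x jI] by (simp add: Y_def pert_map_def)
    have D: "D i j \<in> carrier_mat (d i) (d j)" using j i by (intro Dmat_carrier) auto
    have "(\<lambda>t. \<Sum>m<d j. D i j $$ (l, m) * (Nom L ^^ t) Y j $ m) \<longlonglongrightarrow> 0"
      using Nom_iter_tendsto_0[of j Y, OF jn Y] by (intro tendsto_null_sum tendsto_mult_right_zero) auto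
    then show "(\<lambda>t. (D i j *\<^sub>v (Nom L ^^ t) Y j) $ l) \<longlonglongrightarrow> 0"
      using index_mult_mat_vec_sum[OF D Nom_iter_carrier[of j Y, OF jI Y] l] by simp
  qed
  then show "(\<lambda>t. - (\<Sum>j\<in>{1..<i}. (-1) ^ (i - 1 - j) * (D i j *\<^sub>v (Nom L ^^ t) (pert_map d D x) j) $ l))
      \<longlonglongrightarrow> 0"
    using tendsto_minus by (fastforce simp: Y_def)
qed

end

theorem corollary1:
  fixes n :: nat and d :: "nat \<Rightarrow> nat"
    and N :: "nat \<Rightarrow> complex vec \<Rightarrow> real"
    and L C V :: "nat \<Rightarrow> complex mat"
    and lam :: "nat \<Rightarrow> nat \<Rightarrow> complex"
  assumes n: "n \<ge> 1"
    and dpos: "\<And>i. i \<in> {1..n} \<Longrightarrow> d i \<ge> 1"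
    and norms: "\<And>i. i \<in> {1..n} \<Longrightarrow> is_norm_on (d i) (N i)"
    and L_car: "\<And>i. i \<in> {1..n} \<Longrightarrow> L i \<in> carrier_mat (d i) (d i)"
    and C_car: "\<And>i. i \<in> {2..n} \<Longrightarrow> C i \<in> carrier_mat (d i) (d (i - 1))"
    and L_inv: "\<And>i. i \<in> {1..n} \<Longrightarrow> invertible_mat (L i)"
    and V_car: "\<And>i. i \<in> {1..n} \<Longrightarrow> V i \<in> carrier_mat (d i) (d i)"
    and V_inv: "\<And>i. i \<in> {1..n} \<Longrightarrow> invertible_mat (V i)"
    and diagonalize: "\<And>i. i \<in> {1..n} \<Longrightarrow>
          L i * V i = V i * mat (d i) (d i) (\<lambda>(l, m). if l = m then lam i l else 0)"
    and spec_disj: "\<And>i j. i \<in> {1..n} \<Longrightarrow> j \<in> {1..n} \<Longrightarrow> i \<noteq> j \<Longrightarrow>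
          spectrum (L i) \<inter> spectrum (L j) = {}"
    and norm_incr: "\<And>i. i \<in> {1..<n} \<Longrightarrow> op_norm (N i) (d i) (L i) < op_norm (N (Suc i)) (d (Suc i)) (L (Suc i))"
    and norm_le1: "op_norm (N n) (d n) (L n) \<le> 1"
  shows "\<forall>x. (\<forall>i\<in>{1..n}. x i \<in> carrier_vec (d i)) \<longrightarrow>
           (\<lambda>t. prod_norm n N (\<lambda>i. ((Lin L C ^^ t) x) i
                   - ((Nom L ^^ t) (pert_map d (Dmat d L C V lam) x)) i)) \<longlonglongrightarrow> 0"
proof -
  interpret norm_ordered_cascade n d L C V lam N
    by (unfold_locales; fact assms)
  show ?thesis
    unfolding prod_norm_def using block_difference_tendsto_0 by (auto intro!: tendsto_null_sum)
qed

end
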